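(* Let $n\ge2$, let $A_1,\dots,A_n$ be nonzero real $n\times n$ matrices, and let $G_B$ be as in the context. (i) If there is $\lambda>0$ such that $\|A_i-\lambda I_n\|_{\mathrm{op}}\le\lambda/4$ for all $i=1,\dots,n$, then $G_B$ is monotone. (ii) If there is $\lambda>0$ such that $\|A_i-\lambda I_n\|_{\mathrm{op}}<\lambda/4$ for all $i=1,\dots,n$, then $G_B$ is $3$-monotone.
   Context: $B(u,v,w)=\mathrm{diag}[u^TA_1v,\dots,u^TA_nv]\,w$ for $u,v,w\in\mathbb R^n$; $G_B(0)=0$ and $G_B(u)=B(u,u,u)/|u|$ for $u\ne0$, with $|\cdot|$ the Euclidean norm. $\|A\|_{\mathrm{op}}=\max_{|x|=1}|Ax|$. A map $F:\mathbb R^n\to\mathbb R^n$ is monotone if $(F(u)-F(v))\cdot(u-v)\ge0$ for all $u,v$; for $\alpha>0$ it is $\alpha$-monotone if there is $C>0$ with $(F(u)-F(v))\cdot(u-v)\ge C|u-v|^\alpha$ for all $u,v$. *)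

theory Defs
  imports "HOL-Analysis.Analysis"
begin

definition Bmap :: "('n::finite \<Rightarrow> real^'n^'n) \<Rightarrow> real^'n \<Rightarrow> real^'n \<Rightarrow> real^'n \<Rightarrow> real^'n" where
  "Bmap A u v w = (\<chi> i. (u \<bullet> (A i *v v)) * w $ i)"

definition GB :: "('n::finite \<Rightarrow> real^'n^'n) \<Rightarrow> real^'n \<Rightarrow> real^'n" where
  "GB A u = (if u = 0 then 0 else (1 / norm u) *\<^sub>R Bmap A u u u)"

definition op_norm :: "real^'n^'m \<Rightarrow> real" where
  "op_norm M = onorm (\<lambda>x. M *v x)"

definition monotone_map :: "('a::real_inner \<Rightarrow> 'a) \<Rightarrow> bool" where
  "monotone_map F \<longleftrightarrow> (\<forall>u v. (F u - F v) \<bullet> (u - v) \<ge> 0)"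

definition alpha_monotone :: "real \<Rightarrow> ('a::real_inner \<Rightarrow> 'a) \<Rightarrow> bool" where
  "alpha_monotone \<alpha> F \<longleftrightarrow> (\<exists>C>0. \<forall>u v. (F u - F v) \<bullet> (u - v) \<ge> C * norm (u - v) powr \<alpha>)"

end

theory Submission
  imports Defs
begin

text \<open>Write \<open>E\<^sub>i = A\<^sub>i - \<lambda> I\<close>. Then \<open>G\<^sub>B(x) = \<lambda> |x| x + G\<^sub>E(x)\<close>, and along a line
  \<open>x(t) = v + t w\<close> avoiding the origin the derivative of \<open>\<lambda> |x| x \<bullet> w\<close> is at least
  \<open>\<lambda> |x| |w|\<^sup>2\<close>, while the derivative of \<open>G\<^sub>E(x) \<bullet> w\<close> is at most \<open>4 max\<^sub>i \<parallel>E\<^sub>i\<parallel> |x| |w|\<^sup>2\<close>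
  in absolute value. Hence \<open>t \<mapsto> G\<^sub>B(x(t)) \<bullet> w\<close> is nondecreasing when \<open>\<parallel>E\<^sub>i\<parallel> \<le> \<lambda>/4\<close>; lines
  through the origin are handled by the homogeneity \<open>G\<^sub>B(c x) = c |c| G\<^sub>B(x)\<close>. Under the
  strict bound a multiple \<open>\<mu> |x| x\<close> can be split off, and
  \<open>(|u| u - |v| v) \<bullet> (u - v) \<ge> |u - v|\<^sup>3 / 2\<close> gives 3-monotonicity.\<close>

lemma op_norm_nonneg: "0 \<le> op_norm M"
  unfolding op_norm_def by (rule onorm_pos_le) simp

lemma abs_inner_matrix_vector_le:
  assumes "op_norm M \<le> e"
  shows "\<bar>x \<bullet> (M *v y)\<bar> \<le> e * norm x * norm y"
proof -
  have "\<bar>x \<bullet> (M *v y)\<bar> \<le> norm x * norm (M *v y)" by (rule Cauchy_Schwarz_ineq2)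
  also have "\<dots> \<le> norm x * (op_norm M * norm y)"
    unfolding op_norm_def by (intro mult_left_mono onorm) simp_all
  also have "\<dots> \<le> norm x * (e * norm y)"
    using assms by (intro mult_left_mono mult_right_mono) simp_all
  finally show ?thesis by (simp only: mult_ac)
qed

lemma abs_sum_components_le:
  fixes x w :: "real^'n"
  assumes "\<And>i. \<bar>c i\<bar> \<le> K"
  shows "\<bar>\<Sum>i\<in>UNIV. c i * x$i * w$i\<bar> \<le> K * norm x * norm w"
proof -
  have K: "K \<ge> 0" using assms[of undefined] by linarith
  have "\<bar>\<Sum>i\<in>UNIV. c i * x$i * w$i\<bar> \<le> (\<Sum>i\<in>UNIV. K * (\<bar>x$i\<bar> * \<bar>w$i\<bar>))"
    by (rule order_trans[OF sum_abs sum_mono]) (simp add: abs_mult mult.assoc mult_right_mono assms)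
  also have "\<dots> = K * ((\<chi> i. \<bar>x$i\<bar>) \<bullet> (\<chi> i. \<bar>w$i\<bar>))"
    by (simp add: inner_vec_def sum_distrib_left)
  also have "\<dots> \<le> K * (norm (\<chi> i. \<bar>x$i\<bar>) * norm (\<chi> i. \<bar>w$i\<bar>))"
    by (rule mult_left_mono[OF norm_cauchy_schwarz K])
  also have "\<dots> = K * norm x * norm w" by (simp add: norm_vec_def)
  finally show ?thesis .
qed

lemma norm_scaled_diff_inner_ge:
  fixes u v :: "'a::real_inner"
  shows "(norm u *\<^sub>R u - norm v *\<^sub>R v) \<bullet> (u - v) \<ge> norm (u - v) ^ 3 / 2"
proof -
  define a b c W where "a = norm u" "b = norm v" "c = u \<bullet> v" "W = norm (u - v)"
  have lhs: "(norm u *\<^sub>R u - norm v *\<^sub>R v) \<bullet> (u - v) = a * (a^2 - c) - b * (c - b^2)"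
    by (simp add: a_b_c_W_def inner_diff_left inner_diff_right power2_norm_eq_inner inner_commute algebra_simps)
  have W2: "W^2 = a^2 + b^2 - 2 * c"
    by (simp add: a_b_c_W_def power2_norm_eq_inner inner_diff_left inner_diff_right inner_commute)
  have "W \<le> a + b" unfolding a_b_c_W_def by (rule norm_triangle_ineq4)
  moreover have "0 \<le> a" "0 \<le> b" "0 \<le> W" by (auto simp: a_b_c_W_def)
  ultimately have "W * W^2 \<le> (a + b) * W^2 + (a + b) * (a - b)^2"
    by (simp add: mult_right_mono add_increasing2)
  also have "\<dots> = 2 * (a * (a^2 - c) - b * (c - b^2))" unfolding W2 by algebra
  finally show ?thesis unfolding lhs by (simp add: a_b_c_W_def power3_eq_cube power2_eq_square)
qed

text \<open>Valid also at \<open>x = 0\<close>, where both sides vanish since division by zero yields zero.\<close>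
lemma GB_inner_eq: "GB A x \<bullet> w = (\<Sum>i\<in>UNIV. (x \<bullet> (A i *v x)) * x$i * w$i) / norm x"
  by (simp add: GB_def Bmap_def inner_vec_def sum_divide_distrib mult.assoc)

lemma GB_shift: "GB (\<lambda>i. A i - c *\<^sub>R mat 1) x = GB A x - (c * norm x) *\<^sub>R x"
proof (cases "x = 0")
  case False
  have "x \<bullet> ((A i - c *\<^sub>R mat 1) *v x) = x \<bullet> (A i *v x) - c * norm x ^ 2" for i
    by (simp add: matrix_vector_mult_diff_rdistrib scaleR_matrix_vector_assoc[symmetric]
        inner_diff_right power2_norm_eq_inner)
  then have "Bmap (\<lambda>i. A i - c *\<^sub>R mat 1) x x x = Bmap A x x x - (c * norm x ^ 2) *\<^sub>R x"
    by (simp add: Bmap_def vec_eq_iff algebra_simps)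
  with False show ?thesis
    by (simp add: GB_def scaleR_diff_right power2_eq_square)
qed (simp add: GB_def)

lemma GB_scaleR: "GB A (c *\<^sub>R x) = (c * \<bar>c\<bar>) *\<^sub>R GB A x"
proof (cases "c = 0 \<or> x = 0")
  case False
  have "Bmap A (c *\<^sub>R x) (c *\<^sub>R x) (c *\<^sub>R x) = (c * c * c) *\<^sub>R Bmap A x x x"
    by (simp add: Bmap_def vec_eq_iff matrix_vector_mult_scaleR)
  moreover have "c * c * c / (\<bar>c\<bar> * norm x) = c * \<bar>c\<bar> / norm x"
    using False by (cases "c > 0") (auto simp: divide_simps)
  ultimately show ?thesis
    using False by (simp add: GB_def)
qed (auto simp: GB_def)

lemma norm_line_derivative:
  assumes "v + t *\<^sub>R w \<noteq> 0"
  shows "((\<lambda>s. norm (v + s *\<^sub>R w)) has_real_derivative ((v + t *\<^sub>R w) \<bullet> w / norm (v + t *\<^sub>R w))) (at t)"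
proof -
  have "((\<lambda>s. norm (v + s *\<^sub>R w)) has_derivative (\<lambda>h. (h *\<^sub>R w) \<bullet> sgn (v + t *\<^sub>R w))) (at t)"
    by (rule has_derivative_compose[of "\<lambda>s. v + s *\<^sub>R w", OF _ has_derivative_norm[OF assms]])
      (auto intro!: derivative_eq_intros)
  then show ?thesis
    unfolding has_field_derivative_def
    by (rule has_derivative_eq_rhs) (simp add: fun_eq_iff sgn_div_norm inner_commute divide_inverse mult_ac)
qed

lemma cubic_form_line_derivative:
  fixes B :: "'n::finite \<Rightarrow> real^'n^'n" and v w :: "real^'n" and t :: real
  defines "x \<equiv> v + t *\<^sub>R w"
  shows "((\<lambda>s. \<Sum>i\<in>UNIV. ((v + s *\<^sub>R w) \<bullet> (B i *v (v + s *\<^sub>R w))) * (v + s *\<^sub>R w)$i * w$i)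
      has_real_derivative
      (\<Sum>i\<in>UNIV. ((w \<bullet> (B i *v x) + x \<bullet> (B i *v w)) * x$i + (x \<bullet> (B i *v x)) * w$i) * w$i)) (at t)"
  unfolding x_def has_field_derivative_def
  by (auto intro!: derivative_eq_intros bounded_linear.has_derivative[OF matrix_vector_mul_bounded_linear]
      simp: fun_eq_iff matrix_vector_mult_scaleR sum_distrib_left algebra_simps)

lemma abs_cubic_form_derivative_le:
  fixes B :: "'n::finite \<Rightarrow> real^'n^'n"
  assumes B: "\<And>i. op_norm (B i) \<le> e"
  shows "\<bar>\<Sum>i\<in>UNIV. ((w \<bullet> (B i *v x) + x \<bullet> (B i *v w)) * x$i + (x \<bullet> (B i *v x)) * w$i) * w$i\<bar>
    \<le> 3 * e * norm x ^ 2 * norm w ^ 2"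
proof -
  have "\<bar>w \<bullet> (B i *v x) + x \<bullet> (B i *v w)\<bar> \<le> 2 * e * norm x * norm w" for i
    using abs_inner_matrix_vector_le[OF B, of w i x] abs_inner_matrix_vector_le[OF B, of x i w]
    by (simp add: abs_triangle_ineq[THEN order_trans] mult_ac)
  then have "\<bar>\<Sum>i\<in>UNIV. (w \<bullet> (B i *v x) + x \<bullet> (B i *v w)) * x$i * w$i\<bar>
      \<le> 2 * e * norm x * norm w * norm x * norm w"
    by (rule abs_sum_components_le)
  moreover have "\<bar>x \<bullet> (B i *v x)\<bar> \<le> e * norm x ^ 2" for i
    using abs_inner_matrix_vector_le[OF B] by (simp add: power2_eq_square mult.assoc)
  then have "\<bar>\<Sum>i\<in>UNIV. (x \<bullet> (B i *v x)) * w$i * w$i\<bar> \<le> e * norm x ^ 2 * norm w * norm w"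
    by (rule abs_sum_components_le)
  ultimately show ?thesis
    unfolding distrib_right sum.distrib
    by (rule abs_triangle_ineq[THEN order_trans, OF add_mono[THEN order_trans]])
      (simp add: power2_eq_square algebra_simps)
qed

lemma GB_line_derivative_bound:
  fixes B :: "'n::finite \<Rightarrow> real^'n^'n"
  assumes B: "\<And>i. op_norm (B i) \<le> e" and x0: "v + t *\<^sub>R w \<noteq> 0"
  obtains D where "((\<lambda>s. GB B (v + s *\<^sub>R w) \<bullet> w) has_real_derivative D) (at t)"
    and "\<bar>D\<bar> \<le> 4 * e * norm (v + t *\<^sub>R w) * norm w ^ 2"
proof -
  define x where "x = v + t *\<^sub>R w"
  define N W where "N = norm x" "W = norm w"
  define S where "S = (\<Sum>i\<in>UNIV. (x \<bullet> (B i *v x)) * x$i * w$i)"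
  define T where "T = (\<Sum>i\<in>UNIV. ((w \<bullet> (B i *v x) + x \<bullet> (B i *v w)) * x$i + (x \<bullet> (B i *v x)) * w$i) * w$i)"
  have N: "N > 0" using x0 by (simp add: N_W_def x_def)
  from DERIV_divide[OF cubic_form_line_derivative norm_line_derivative[OF x0]] x0
  have "((\<lambda>s. GB B (v + s *\<^sub>R w) \<bullet> w) has_real_derivative (T * N - S * (x \<bullet> w / N)) / (N * N)) (at t)"
    by (simp add: GB_inner_eq S_def T_def x_def N_W_def)
  moreover have "\<bar>(T * N - S * (x \<bullet> w / N)) / (N * N)\<bar> \<le> 4 * e * N * W ^ 2"
  proof -
    have e: "e \<ge> 0" using B op_norm_nonneg order_trans by blast
    have T: "\<bar>T\<bar> \<le> 3 * e * N^2 * W^2"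
      unfolding T_def N_W_def by (rule abs_cubic_form_derivative_le[OF B])
    have "\<bar>x \<bullet> (B i *v x)\<bar> \<le> e * N ^ 2" for i
      using abs_inner_matrix_vector_le[OF B] by (simp add: N_W_def power2_eq_square mult.assoc)
    then have S: "\<bar>S\<bar> \<le> e * N ^ 2 * N * W"
      unfolding S_def N_W_def by (rule abs_sum_components_le)
    have P: "\<bar>x \<bullet> w / N\<bar> \<le> W"
      using Cauchy_Schwarz_ineq2[of x w] N by (simp add: N_W_def divide_le_eq mult.commute)
    have "\<bar>T * N - S * (x \<bullet> w / N)\<bar> \<le> \<bar>T\<bar> * N + \<bar>S\<bar> * \<bar>x \<bullet> w / N\<bar>"
      using N by (metis abs_mult abs_of_pos abs_triangle_ineq4)
    also have "\<dots> \<le> 3 * e * N^2 * W^2 * N + e * N ^ 2 * N * W * W"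
      using T S P N e by (intro add_mono mult_mono) auto
    finally show ?thesis using N by (simp add: divide_le_eq power2_eq_square algebra_simps)
  qed
  ultimately show ?thesis using that by (simp add: x_def N_W_def)
qed

lemma norm_times_inner_line_derivative:
  assumes "v + t *\<^sub>R w \<noteq> 0"
  obtains D where "((\<lambda>s. norm (v + s *\<^sub>R w) * ((v + s *\<^sub>R w) \<bullet> w)) has_real_derivative D) (at t)"
    and "norm (v + t *\<^sub>R w) * norm w ^ 2 \<le> D"
proof -
  define x where "x = v + t *\<^sub>R w"
  have "((\<lambda>s. (v + s *\<^sub>R w) \<bullet> w) has_real_derivative w \<bullet> w) (at t)"
    unfolding has_field_derivative_def
    by (auto intro!: derivative_eq_intros simp: fun_eq_iff)
  from DERIV_mult[OF norm_line_derivative[OF assms] this]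
  have "((\<lambda>s. norm (v + s *\<^sub>R w) * ((v + s *\<^sub>R w) \<bullet> w)) has_real_derivative
      (x \<bullet> w) ^ 2 / norm x + norm x * norm w ^ 2) (at t)"
    by (simp add: x_def power2_eq_square dot_square_norm mult.commute)
  moreover have "norm x * norm w ^ 2 \<le> (x \<bullet> w) ^ 2 / norm x + norm x * norm w ^ 2" by simp
  ultimately show ?thesis using that by (simp add: x_def)
qed

lemma GB_inner_mono_on_segment:
  fixes A :: "'n::finite \<Rightarrow> real^'n^'n"
  assumes A: "\<And>i. op_norm (A i - lam *\<^sub>R mat 1) \<le> lam / 4"
    and avoids_0: "\<And>t. t \<in> {0..1} \<Longrightarrow> v + t *\<^sub>R w \<noteq> 0"
  shows "GB A v \<bullet> w \<le> GB A (v + w) \<bullet> w"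
proof -
  define E where "E i = A i - lam *\<^sub>R mat 1" for i
  have lam: "lam \<ge> 0" using A[of undefined] op_norm_nonneg[of "A undefined - lam *\<^sub>R mat 1"] by simp
  have split: "GB A x \<bullet> w = GB E x \<bullet> w + lam * (norm x * (x \<bullet> w))" for x
    unfolding E_def GB_shift by (simp add: inner_diff_left)
  have "\<exists>D. ((\<lambda>s. GB A (v + s *\<^sub>R w) \<bullet> w) has_real_derivative D) (at t) \<and> D \<ge> 0"
    if "0 \<le> t" "t \<le> 1" for t
  proof -
    have x0: "v + t *\<^sub>R w \<noteq> 0" using avoids_0 that by simp
    obtain D1 where D1: "((\<lambda>s. GB E (v + s *\<^sub>R w) \<bullet> w) has_real_derivative D1) (at t)"
        "\<bar>D1\<bar> \<le> 4 * (lam / 4) * norm (v + t *\<^sub>R w) * norm w ^ 2"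
      using GB_line_derivative_bound[of E "lam / 4", OF A[folded E_def] x0] by blast
    obtain D2 where D2: "((\<lambda>s. norm (v + s *\<^sub>R w) * ((v + s *\<^sub>R w) \<bullet> w)) has_real_derivative D2) (at t)"
        "norm (v + t *\<^sub>R w) * norm w ^ 2 \<le> D2"
      using norm_times_inner_line_derivative[OF x0] by blast
    have "((\<lambda>s. GB A (v + s *\<^sub>R w) \<bullet> w) has_real_derivative D1 + lam * D2) (at t)"
      unfolding split by (intro DERIV_add DERIV_cmult D1 D2)
    moreover have "D1 + lam * D2 \<ge> 0"
      using D1(2) mult_left_mono[OF D2(2) lam] by (simp add: abs_le_iff)
    ultimately show ?thesis by blast
  qed
  from DERIV_nonneg_imp_nondecreasing[of 0 1, OF _ this] show ?thesis by simp
qed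

lemma GB_inner_self_nonneg:
  fixes A :: "'n::finite \<Rightarrow> real^'n^'n"
  assumes A: "\<And>i. op_norm (A i - lam *\<^sub>R mat 1) \<le> lam"
  shows "0 \<le> GB A z \<bullet> z"
proof -
  define E where "E i = A i - lam *\<^sub>R mat 1" for i
  have "\<bar>z \<bullet> (E i *v z)\<bar> \<le> lam * norm z ^ 2" for i
    using abs_inner_matrix_vector_le[OF A] by (simp add: E_def power2_eq_square mult.assoc)
  then have "\<bar>\<Sum>i\<in>UNIV. (z \<bullet> (E i *v z)) * z$i * z$i\<bar> \<le> lam * norm z ^ 2 * norm z * norm z"
    by (rule abs_sum_components_le)
  then have "\<bar>GB E z \<bullet> z\<bar> \<le> lam * norm z ^ 3"
    by (cases "z = 0") (simp_all add: GB_inner_eq divide_le_eq power2_eq_square power3_eq_cube)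
  moreover have "GB A z \<bullet> z = GB E z \<bullet> z + lam * norm z ^ 3"
    unfolding E_def GB_shift by (simp add: inner_diff_left power2_norm_eq_inner[symmetric] power3_eq_cube power2_eq_square)
  ultimately show ?thesis by (simp add: abs_le_iff)
qed

lemma GB_monotone:
  fixes A :: "'n::finite \<Rightarrow> real^'n^'n"
  assumes A: "\<And>i. op_norm (A i - lam *\<^sub>R mat 1) \<le> lam / 4"
  shows "monotone_map (GB A)"
  unfolding monotone_map_def
proof (intro allI)
  fix u v :: "real^'n"
  define w where "w = u - v"
  show "0 \<le> (GB A u - GB A v) \<bullet> (u - v)"
  proof (cases "\<exists>t\<in>{0..1}. v + t *\<^sub>R w = 0")
    case True
    then obtain t where t: "0 \<le> t" "t \<le> 1" and "v + t *\<^sub>R w = 0" by auto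
    then have v: "v = (- t) *\<^sub>R w" and u: "u = (1 - t) *\<^sub>R w"
      by (simp_all add: w_def add_eq_0_iff2 algebra_simps)
    have lam: "lam \<ge> 0" using A[of undefined] op_norm_nonneg[of "A undefined - lam *\<^sub>R mat 1"] by simp
    have "op_norm (A i - lam *\<^sub>R mat 1) \<le> lam" for i using A[of i] lam by linarith
    then have "0 \<le> GB A w \<bullet> w" by (rule GB_inner_self_nonneg)
    then have "0 \<le> ((1 - t) * \<bar>1 - t\<bar> - (- t) * \<bar>- t\<bar>) * (GB A w \<bullet> w)"
      using t by (intro mult_nonneg_nonneg) auto
    also have "\<dots> = (GB A u - GB A v) \<bullet> (u - v)"
      unfolding w_def[symmetric] by (simp only: u v GB_scaleR inner_diff_left inner_scaleR_left left_diff_distrib)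
    finally show ?thesis .
  next
    case False
    then have "GB A v \<bullet> w \<le> GB A (v + w) \<bullet> w"
      by (intro GB_inner_mono_on_segment[OF A]) auto
    then show ?thesis by (simp add: w_def inner_diff_left)
  qed
qed

lemma GB_alpha_monotone_3:
  fixes A :: "'n::finite \<Rightarrow> real^'n^'n"
  assumes A: "\<And>i. op_norm (A i - lam *\<^sub>R mat 1) \<le> e" and e: "e < lam / 4"
  shows "alpha_monotone 3 (GB A)"
proof -
  define mu where "mu = (lam - 4 * e) / 2"
  define A' where "A' i = A i - mu *\<^sub>R mat 1" for i
  have mu: "mu > 0" using e by (simp add: mu_def)
  have "A' i - (lam - mu) *\<^sub>R mat 1 = A i - lam *\<^sub>R mat 1" for i
    by (simp add: A'_def algebra_simps)
  moreover have "e \<le> (lam - mu) / 4" using e by (simp add: mu_def field_simps)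
  ultimately have "op_norm (A' i - (lam - mu) *\<^sub>R mat 1) \<le> (lam - mu) / 4" for i
    using A order_trans by metis
  then have A'_mono: "0 \<le> (GB A' u - GB A' v) \<bullet> (u - v)" for u v
    using GB_monotone unfolding monotone_map_def by blast
  show ?thesis unfolding alpha_monotone_def
  proof (intro exI[of _ "mu / 2"] conjI allI)
    fix u v :: "real^'n"
    have "(GB A u - GB A v) \<bullet> (u - v) =
        (GB A' u - GB A' v) \<bullet> (u - v) + mu * ((norm u *\<^sub>R u - norm v *\<^sub>R v) \<bullet> (u - v))"
      unfolding A'_def GB_shift by (simp add: algebra_simps)
    also have "\<dots> \<ge> 0 + mu * (norm (u - v) ^ 3 / 2)"
      using A'_mono mu norm_scaled_diff_inner_ge by (intro add_mono mult_left_mono) auto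
    finally show "mu / 2 * norm (u - v) powr 3 \<le> (GB A u - GB A v) \<bullet> (u - v)" by simp
  qed (use mu in simp)
qed

theorem mainTheorem7:
  fixes A :: "'n::finite \<Rightarrow> real^'n^'n"
  assumes "CARD('n) \<ge> 2"
    and "\<And>i. A i \<noteq> 0"
  shows "((\<exists>lam>0. \<forall>i. op_norm (A i - lam *\<^sub>R mat 1) \<le> lam / 4) \<longrightarrow> monotone_map (GB A))
    \<and> ((\<exists>lam>0. \<forall>i. op_norm (A i - lam *\<^sub>R mat 1) < lam / 4) \<longrightarrow> alpha_monotone 3 (GB A))"
proof (intro conjI impI)
  assume "\<exists>lam>0. \<forall>i. op_norm (A i - lam *\<^sub>R mat 1) \<le> lam / 4"
  then show "monotone_map (GB A)" using GB_monotone by blast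
next
  assume "\<exists>lam>0. \<forall>i. op_norm (A i - lam *\<^sub>R mat 1) < lam / 4"
  then obtain lam where lam: "\<And>i. op_norm (A i - lam *\<^sub>R mat 1) < lam / 4" by blast
  define e where "e = Max (range (\<lambda>i. op_norm (A i - lam *\<^sub>R mat 1)))"
  have "op_norm (A i - lam *\<^sub>R mat 1) \<le> e" for i
    unfolding e_def by (rule Max_ge) auto
  moreover have "e \<in> range (\<lambda>i. op_norm (A i - lam *\<^sub>R mat 1))"
    unfolding e_def by (rule Max_in) auto
  then have "e < lam / 4" using lam by auto
  ultimately show "alpha_monotone 3 (GB A)" by (rule GB_alpha_monotone_3)
qed

end
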